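(* Let $L_1,L_2,L_3\in\mathbb{Z}[x_1,x_2]$ be pairwise non-proportional linear forms, let $\Delta_{i,j}$ denote the resultant of $L_i,L_j$ and $\Delta=|\Delta_{1,2}\Delta_{1,3}\Delta_{2,3}|\neq0$. Write $L_i=\ell_iL_i^*$ with $\ell_i\in\mathbb{Z}$ and $L_i^*$ primitive. For $\mathbf{h}\in\mathbb{N}^3$ let $$\rho(\mathbf{h})=\#\{\mathbf{x}\in[0,h_1h_2h_3)^2\cap\mathbb{Z}^2:\ h_i\mid L_i(\mathbf{x})\ (i=1,2,3)\}.$$ Let $p$ be a prime and $e_1,e_2,e_3\ge0$ integers. (i) If $\min\{e_i,v_p(\ell_i)\}=0$ (for the relevant index $i$), then respectively $\rho(p^{e_1},1,1)=p^{e_1}$, $\rho(1,p^{e_2},1)=p^{e_2}$, $\rho(1,1,p^{e_3})=p^{e_3}$. (ii) Suppose $0\le e_i\le e_j\le e_k$ for a permutation $\{i,j,k\}$ of $\{1,2,3\}$. Then $\rho(p^{e_1},p^{e_2},p^{e_3})=p^{2e_i+e_j+e_k}$ if $p\nmid\Delta$, while if $p\mid\Delta$, $$\rho(p^{e_1},p^{e_2},p^{e_3})\le p^{2e_i+e_j+e_k+\min\{e_j,v_p(\Delta)\}+\min\{e_k,v_p(\ell_k)\}}.$$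
   Context: $v_p$ denotes the $p$-adic valuation. *)

theory Defs
  imports "HOL-Computational_Algebra.Computational_Algebra"
begin

definition lin :: "(nat \<Rightarrow> int) \<Rightarrow> (nat \<Rightarrow> int) \<Rightarrow> nat \<Rightarrow> int \<Rightarrow> int \<Rightarrow> int" where
  "lin a b i x y = a i * x + b i * y"

definition res :: "(nat \<Rightarrow> int) \<Rightarrow> (nat \<Rightarrow> int) \<Rightarrow> nat \<Rightarrow> nat \<Rightarrow> int" where
  "res a b i j = a i * b j - a j * b i"

definition Delta :: "(nat \<Rightarrow> int) \<Rightarrow> (nat \<Rightarrow> int) \<Rightarrow> int" where
  "Delta a b = \<bar>res a b 1 2 * res a b 1 3 * res a b 2 3\<bar>"

definition ell :: "(nat \<Rightarrow> int) \<Rightarrow> (nat \<Rightarrow> int) \<Rightarrow> nat \<Rightarrow> int" where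
  "ell a b i = gcd (a i) (b i)"

definition proportional :: "(nat \<Rightarrow> int) \<Rightarrow> (nat \<Rightarrow> int) \<Rightarrow> nat \<Rightarrow> nat \<Rightarrow> bool" where
  "proportional a b i j \<longleftrightarrow> (\<exists>c d :: int. (c, d) \<noteq> (0, 0) \<and> c * a i = d * a j \<and> c * b i = d * b j)"

definition rho :: "(nat \<Rightarrow> int) \<Rightarrow> (nat \<Rightarrow> int) \<Rightarrow> nat \<Rightarrow> nat \<Rightarrow> nat \<Rightarrow> nat" where
  "rho a b h1 h2 h3 = card {(x :: int, y :: int).
      0 \<le> x \<and> x < int (h1 * h2 * h3) \<and> 0 \<le> y \<and> y < int (h1 * h2 * h3) \<and>
      int h1 dvd lin a b 1 x y \<and> int h2 dvd lin a b 2 x y \<and> int h3 dvd lin a b 3 x y}"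

end

theory Submission
  imports Defs
begin

text \<open>
  Put \<open>q = p\<^sup>N\<close> with \<open>N = e\<^sub>1 + e\<^sub>2 + e\<^sub>3\<close>. A linear substitution of determinant prime to \<open>q\<close>
  permutes \<open>[0,q)\<^sup>2\<close> modulo \<open>q\<close>, so counts of points with divisibility conditions on linear forms can be
  computed in adapted coordinates. If \<open>p \<nmid> \<Delta>\<close>, the condition on \<open>L\<^sub>i\<close> (smallest exponent) follows from
  those on \<open>L\<^sub>j, L\<^sub>k\<close> by Cramer's rule, and \<open>(L\<^sub>j, L\<^sub>k)\<close> itself is such a substitution, giving
  \<open>(q/p\<^bsup>e\<^sub>j\<^esup>)(q/p\<^bsup>e\<^sub>k\<^esup>)\<close> points. If \<open>p | \<Delta>\<close>, drop \<open>L\<^sub>i\<close> and complete the primitive part of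
  \<open>L\<^sub>k\<close> to a unimodular substitution: then \<open>L\<^sub>k = \<ell>\<^sub>k X\<close> and \<open>L\<^sub>j = c X + d Y\<close> with \<open>\<ell>\<^sub>k d = \<plusminus>\<Delta>\<^sub>j\<^sub>k\<close>,
  and a congruence \<open>p\<^sup>f | c + d Y\<close> has at most \<open>p\<^bsup>N - f + min(f, v\<^sub>p(d))\<^esup>\<close> solutions in \<open>[0,q)\<close>.
\<close>

definition square_count :: "int \<Rightarrow> (int \<Rightarrow> int \<Rightarrow> bool) \<Rightarrow> nat" where
  "square_count q P = card {(x, y) \<in> {0..<q} \<times> {0..<q}. P x y}"

lemma square_count_cong:
  assumes "\<And>x y. 0 \<le> x \<Longrightarrow> x < q \<Longrightarrow> 0 \<le> y \<Longrightarrow> y < q \<Longrightarrow> P x y \<longleftrightarrow> Q x y"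
  shows "square_count q P = square_count q Q"
  unfolding square_count_def by (rule arg_cong[where f = card]) (auto simp: assms)

lemma square_count_mono:
  assumes "\<And>x y. P x y \<Longrightarrow> Q x y"
  shows "square_count q P \<le> square_count q Q"
  unfolding square_count_def
  by (rule card_mono[OF finite_subset[of _ "{0..<q} \<times> {0..<q}"]]) (auto simp: assms)

lemma square_count_product:
  "square_count q (\<lambda>x y. A x \<and> B y) = card {x \<in> {0..<q}. A x} * card {y \<in> {0..<q}. B y}"
proof -
  have "{(x, y) \<in> {0..<q} \<times> {0..<q}. A x \<and> B y} = {x \<in> {0..<q}. A x} \<times> {y \<in> {0..<q}. B y}"
    by auto
  then show ?thesis
    unfolding square_count_def by (simp add: card_cartesian_product)
qed

lemma square_count_le_product:
  assumes "card {x \<in> {0..<q}. A x} \<le> m" and "\<And>x. card {y \<in> {0..<q}. B x y} \<le> n"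
  shows "square_count q (\<lambda>x y. A x \<and> B x y) \<le> m * n"
proof -
  have "square_count q (\<lambda>x y. A x \<and> B x y)
      = card (SIGMA x:{x \<in> {0..<q}. A x}. {y \<in> {0..<q}. B x y})"
    unfolding square_count_def by (rule arg_cong[where f = card]) auto
  also have "\<dots> = (\<Sum>x \<in> {x \<in> {0..<q}. A x}. card {y \<in> {0..<q}. B x y})"
    by (rule card_SigmaI) (auto intro: finite_subset[of _ "{0..<q}"])
  also have "\<dots> \<le> card {x \<in> {0..<q}. A x} * n"
    using sum_bounded_above[of _ "\<lambda>x. card {y \<in> {0..<q}. B x y}"] assms(2) by fastforce
  also have "\<dots> \<le> m * n"
    using assms(1) by simp
  finally show ?thesis .
qed

lemma card_residue_class:
  fixes q D r :: int
  assumes "D > 0" and "D dvd q" and "q \<ge> 0"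
  shows "card {y \<in> {0..<q}. y mod D = r mod D} = nat (q div D)"
proof -
  have "{y \<in> {0..<q}. y mod D = r mod D} = (\<lambda>t. r mod D + D * t) ` {0..<q div D}"
  proof (intro set_eqI iffI)
    fix y assume "y \<in> {y \<in> {0..<q}. y mod D = r mod D}"
    then have "0 \<le> y" "y < q" and y: "y = r mod D + D * (y div D)"
      using div_mult_mod_eq[of y D] by (auto simp: algebra_simps)
    moreover have "y div D < q div D"
    proof -
      obtain k where q: "q = D * k"
        using \<open>D dvd q\<close> by blast
      have "D * (y div D) \<le> y"
        using pos_mod_sign[of D y] \<open>D > 0\<close> minus_mod_eq_mult_div[of y D] by linarith
      then have "D * (y div D) < D * k"
        using \<open>y < q\<close> q by linarith
      then show ?thesis
        using \<open>D > 0\<close> q by simp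
    qed
    ultimately show "y \<in> (\<lambda>t. r mod D + D * t) ` {0..<q div D}"
      using \<open>D > 0\<close> by (auto simp: pos_imp_zdiv_nonneg_iff)
  next
    fix y assume "y \<in> (\<lambda>t. r mod D + D * t) ` {0..<q div D}"
    then obtain t where t: "0 \<le> t" "t + 1 \<le> q div D" and y: "y = r mod D + D * t"
      by auto
    have "D * (t + 1) \<le> q"
      using mult_left_mono[OF t(2), of D] \<open>D > 0\<close> \<open>D dvd q\<close> by simp
    moreover have "0 \<le> r mod D" "r mod D < D" and "0 \<le> D * t"
      using \<open>D > 0\<close> t(1) by simp_all
    ultimately show "y \<in> {y \<in> {0..<q}. y mod D = r mod D}"
      unfolding y by (simp add: algebra_simps)
  qed
  moreover have "inj_on (\<lambda>t. r mod D + D * t) {0..<q div D}"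
    using \<open>D > 0\<close> by (auto simp: inj_on_def)
  ultimately show ?thesis
    by (simp add: card_image)
qed

lemma card_multiples:
  fixes q m :: int
  assumes "m > 0" and "m dvd q" and "q \<ge> 0"
  shows "card {y \<in> {0..<q}. m dvd y} = nat (q div m)"
  using card_residue_class[OF assms, of 0] by (simp add: dvd_eq_mod_eq_0)

lemma nat_power_div_power:
  fixes p :: nat
  assumes "p > 0" and "k \<le> n"
  shows "nat (int p ^ n div int p ^ k) = p ^ (n - k)"
  using assms by (simp add: power_diff[symmetric] nat_power_eq)

lemma prime_power_dvd_mult_imp_dvd:
  fixes p d z :: "'a :: factorial_semiring"
  assumes "prime p" and "d \<noteq> 0" and "p ^ f dvd d * z"
  shows "p ^ (f - min f (multiplicity p d)) dvd z"
proof (cases "z = 0")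
  case False
  have "f \<le> multiplicity p (d * z)"
    using assms False by (simp add: power_dvd_iff_le_multiplicity)
  also have "\<dots> = multiplicity p d + multiplicity p z"
    using assms False by (simp add: prime_elem_multiplicity_mult_distrib)
  finally show ?thesis
    by (intro multiplicity_dvd') simp
qed simp

lemma card_linear_congruence_le:
  fixes c d :: int
  assumes p: "prime p" and "f \<le> N" and "d \<noteq> 0"
  shows "card {y \<in> {0..<int p ^ N}. int p ^ f dvd c + d * y}
    \<le> p ^ (N - f + min f (multiplicity (int p) d))"
proof (cases "{y \<in> {0..<int p ^ N}. int p ^ f dvd c + d * y} = {}")
  case False
  let ?m = "min f (multiplicity (int p) d)"
  define D where "D = int p ^ (f - ?m)"
  have "p > 0"
    using p prime_gt_0_nat by blast
  from False obtain y0 where "0 \<le> y0" "y0 < int p ^ N" and y0: "int p ^ f dvd c + d * y0"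
    by auto
  have "{y \<in> {0..<int p ^ N}. int p ^ f dvd c + d * y} \<subseteq> {y \<in> {0..<int p ^ N}. y mod D = y0 mod D}"
  proof
    fix y assume "y \<in> {y \<in> {0..<int p ^ N}. int p ^ f dvd c + d * y}"
    then have "0 \<le> y" "y < int p ^ N" and y: "int p ^ f dvd c + d * y"
      by auto
    have "int p ^ f dvd d * (y - y0)"
      using dvd_diff[OF y y0] by (simp add: algebra_simps)
    then have "D dvd y - y0"
      unfolding D_def using p \<open>d \<noteq> 0\<close> by (intro prime_power_dvd_mult_imp_dvd) simp_all
    then show "y \<in> {y \<in> {0..<int p ^ N}. y mod D = y0 mod D}"
      using \<open>0 \<le> y\<close> \<open>y < int p ^ N\<close> by (simp add: mod_eq_dvd_iff)
  qed
  then have "card {y \<in> {0..<int p ^ N}. int p ^ f dvd c + d * y}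
      \<le> card {y \<in> {0..<int p ^ N}. y mod D = y0 mod D}"
    by (rule card_mono[rotated]) (auto intro: finite_subset[of _ "{0..<int p ^ N}"])
  also have "\<dots> = nat (int p ^ N div D)"
    unfolding D_def using \<open>p > 0\<close> \<open>f \<le> N\<close> by (intro card_residue_class) (auto simp: le_imp_power_dvd)
  also have "\<dots> = p ^ (N - f + ?m)"
    unfolding D_def using \<open>p > 0\<close> \<open>f \<le> N\<close> by (subst nat_power_div_power) auto
  finally show ?thesis .
next
  case True
  then show ?thesis
    by (simp only: card.empty zero_le)
qed

lemma dvd_linear_mod_iff:
  fixes m q c d x y :: int
  assumes "m dvd q"
  shows "m dvd c * (x mod q) + d * (y mod q) \<longleftrightarrow> m dvd c * x + d * y"
proof -
  have "(c * (x mod q) + d * (y mod q)) mod q = (c * x + d * y) mod q"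
    by (metis mod_add_eq mod_mult_right_eq)
  then show ?thesis
    using assms by (metis dvd_mod_iff)
qed

lemma square_count_linear_change:
  fixes q \<alpha> \<beta> \<gamma> \<delta> :: int
  assumes "q > 0" and det: "coprime (\<alpha> * \<delta> - \<beta> * \<gamma>) q"
    and periodic: "\<And>x y. P (x mod q) (y mod q) \<longleftrightarrow> P x y"
  shows "square_count q (\<lambda>x y. P (\<alpha> * x + \<beta> * y) (\<gamma> * x + \<delta> * y)) = square_count q P"
proof -
  define S where "S = {0..<q} \<times> {0..<q}"
  define F where "F = (\<lambda>(x, y). ((\<alpha> * x + \<beta> * y) mod q, (\<gamma> * x + \<delta> * y) mod q))"
  have "inj_on F S"
  proof (rule inj_onI, clarify)
    fix x y x' y' assume "(x, y) \<in> S" "(x', y') \<in> S" "F (x, y) = F (x', y')"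
    then have "q dvd \<alpha> * (x - x') + \<beta> * (y - y')" "q dvd \<gamma> * (x - x') + \<delta> * (y - y')"
      unfolding F_def by (auto simp: mod_eq_dvd_iff algebra_simps)
    then have "q dvd \<delta> * (\<alpha> * (x - x') + \<beta> * (y - y')) - \<beta> * (\<gamma> * (x - x') + \<delta> * (y - y'))"
      and "q dvd \<alpha> * (\<gamma> * (x - x') + \<delta> * (y - y')) - \<gamma> * (\<alpha> * (x - x') + \<beta> * (y - y'))"
      by simp_all
    then have "q dvd (\<alpha> * \<delta> - \<beta> * \<gamma>) * (x - x')" "q dvd (\<alpha> * \<delta> - \<beta> * \<gamma>) * (y - y')"
      by (simp_all add: algebra_simps)
    then have "x mod q = x' mod q" "y mod q = y' mod q"
      using det by (simp_all add: coprime_commute coprime_dvd_mult_right_iff mod_eq_dvd_iff)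
    then show "x = x' \<and> y = y'"
      using \<open>(x, y) \<in> S\<close> \<open>(x', y') \<in> S\<close> by (simp add: S_def)
  qed
  moreover have "F ` S \<subseteq> S"
    using \<open>q > 0\<close> by (auto simp: F_def S_def)
  ultimately have "bij_betw F S S"
    by (simp add: bij_betw_def endo_inj_surj S_def)
  then have "bij_betw F {z \<in> S. case F z of (x, y) \<Rightarrow> P x y} {w \<in> S. case w of (x, y) \<Rightarrow> P x y}"
    by (rule bij_betw_Collect) simp
  moreover have "{w \<in> S. case w of (x, y) \<Rightarrow> P x y} = {(x, y) \<in> S. P x y}"
    by auto
  moreover have "{z \<in> S. case F z of (x, y) \<Rightarrow> P x y}
      = {(x, y) \<in> S. P (\<alpha> * x + \<beta> * y) (\<gamma> * x + \<delta> * y)}"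
    by (auto simp: F_def periodic)
  ultimately show ?thesis
    unfolding square_count_def S_def using bij_betw_same_card by fastforce
qed

lemma primitive_part_bezout:
  fixes \<alpha> \<beta> :: int
  assumes "\<alpha> \<noteq> 0 \<or> \<beta> \<noteq> 0"
  obtains l a' b' s t where "l = gcd \<alpha> \<beta>" "\<alpha> = l * a'" "\<beta> = l * b'" "s * a' + t * b' = 1"
proof -
  define l where "l = gcd \<alpha> \<beta>"
  obtain a' b' where ab: "\<alpha> = l * a'" "\<beta> = l * b'"
    unfolding l_def by (meson dvd_def gcd_dvd1 gcd_dvd2)
  obtain s t where "s * \<alpha> + t * \<beta> = l"
    unfolding l_def using bezout_int by blast
  then have "l * (s * a' + t * b') = l * 1"
    unfolding ab by (simp add: algebra_simps)
  moreover have "l \<noteq> 0"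
    unfolding l_def using assms by simp
  ultimately have "s * a' + t * b' = 1"
    by (simp only: mult_cancel_left) simp
  with ab that show ?thesis
    unfolding l_def by blast
qed

lemma square_count_two_forms:
  fixes q m n aj bj ak bk :: int
  assumes "q > 0" "m > 0" "n > 0" "m dvd q" "n dvd q" and "coprime (aj * bk - ak * bj) q"
  shows "square_count q (\<lambda>x y. m dvd aj * x + bj * y \<and> n dvd ak * x + bk * y)
    = nat (q div m) * nat (q div n)"
proof -
  have "square_count q (\<lambda>x y. m dvd aj * x + bj * y \<and> n dvd ak * x + bk * y)
      = square_count q (\<lambda>X Y. m dvd X \<and> n dvd Y)"
    using assms by (intro square_count_linear_change) (simp_all add: mult.commute dvd_mod_iff)
  also have "\<dots> = card {x \<in> {0..<q}. m dvd x} * card {y \<in> {0..<q}. n dvd y}"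
    by (rule square_count_product)
  also have "\<dots> = nat (q div m) * nat (q div n)"
    using assms card_multiples[of m q] card_multiples[of n q] by simp
  finally show ?thesis .
qed

lemma square_count_one_form:
  fixes q \<alpha> \<beta> :: int
  assumes "q > 0" and "\<alpha> \<noteq> 0 \<or> \<beta> \<noteq> 0" and "coprime (gcd \<alpha> \<beta>) q"
  shows "square_count q (\<lambda>x y. q dvd \<alpha> * x + \<beta> * y) = nat q"
proof -
  obtain l a' b' s t where l: "l = gcd \<alpha> \<beta>" and ab: "\<alpha> = l * a'" "\<beta> = l * b'"
    and "s * a' + t * b' = 1"
    using primitive_part_bezout[OF assms(2)] by blast
  have "q dvd \<alpha> * x + \<beta> * y \<longleftrightarrow> q dvd a' * x + b' * y" for x y
  proof -
    have "\<alpha> * x + \<beta> * y = l * (a' * x + b' * y)"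
      unfolding ab by (simp add: algebra_simps)
    then show ?thesis
      using assms(3) l by (simp add: coprime_commute coprime_dvd_mult_right_iff)
  qed
  then have "square_count q (\<lambda>x y. q dvd \<alpha> * x + \<beta> * y)
      = square_count q (\<lambda>x y. q dvd a' * x + b' * y \<and> 1 dvd (- t) * x + s * y)"
    by (intro square_count_cong) simp
  also have "\<dots> = nat (q div q) * nat (q div 1)"
    using assms(1) \<open>s * a' + t * b' = 1\<close> by (intro square_count_two_forms) (simp_all add: algebra_simps)
  finally show ?thesis
    using assms(1) by simp
qed

lemma square_count_two_forms_le:
  fixes aj bj ak bk :: int
  assumes p: "prime p" and "f \<le> N" "g \<le> N" and res: "aj * bk - ak * bj \<noteq> 0"
  shows "square_count (int p ^ N) (\<lambda>x y. int p ^ f dvd aj * x + bj * y \<and> int p ^ g dvd ak * x + bk * y)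
    \<le> p ^ (N - g + min g (multiplicity (int p) (gcd ak bk)))
      * p ^ (N - f + min f (multiplicity (int p) (aj * bk - ak * bj)))"
proof -
  let ?q = "int p ^ N"
  have "ak \<noteq> 0 \<or> bk \<noteq> 0"
    using res by auto
  then obtain l a' b' s t where l: "l = gcd ak bk" and ab: "ak = l * a'" "bk = l * b'"
    and st: "s * a' + t * b' = 1"
    using primitive_part_bezout by blast
  define c where "c = aj * s + bj * t"
  define d where "d = bj * a' - aj * b'"
  have ld: "l * d = - (aj * bk - ak * bj)"
    unfolding d_def ab by (simp add: algebra_simps)
  with res have "l \<noteq> 0" "d \<noteq> 0"
    by auto
  have d_mult: "multiplicity (int p) d \<le> multiplicity (int p) (aj * bk - ak * bj)"
    using ld by (intro dvd_imp_multiplicity_le[OF _ res]) (metis dvd_minus_iff dvd_triv_right)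
  \<comment> \<open>In the coordinates \<open>X = a' x + b' y\<close>, \<open>Y = s y - t x\<close> the form \<open>L\<^sub>k\<close> depends on \<open>X\<close> only.\<close>
  have "ak * x + bk * y = l * (a' * x + b' * y)" "aj * x + bj * y = c * (a' * x + b' * y) + d * (- t * x + s * y)"
    for x y
    unfolding ab c_def d_def using st by (simp_all add: algebra_simps) algebra
  then have "square_count ?q (\<lambda>x y. int p ^ f dvd aj * x + bj * y \<and> int p ^ g dvd ak * x + bk * y)
      = square_count ?q (\<lambda>x y. (\<lambda>X Y. int p ^ g dvd l * X \<and> int p ^ f dvd c * X + d * Y)
          (a' * x + b' * y) (- t * x + s * y))"
    by (intro square_count_cong) auto
  also have "\<dots> = square_count ?q (\<lambda>X Y. int p ^ g dvd l * X \<and> int p ^ f dvd c * X + d * Y)"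
  proof (rule square_count_linear_change)
    show "?q > 0"
      using prime_gt_0_nat[OF p] by simp
    show "coprime (a' * s - b' * (- t)) ?q"
      using st by (simp add: algebra_simps)
    have "int p ^ g dvd ?q" "int p ^ f dvd ?q"
      using \<open>f \<le> N\<close> \<open>g \<le> N\<close> by (simp_all add: le_imp_power_dvd)
    then show "(int p ^ g dvd l * (X mod ?q) \<and> int p ^ f dvd c * (X mod ?q) + d * (Y mod ?q))
        \<longleftrightarrow> (int p ^ g dvd l * X \<and> int p ^ f dvd c * X + d * Y)" for X Y
      using dvd_linear_mod_iff[of _ ?q l X 0 Y] dvd_linear_mod_iff[of _ ?q c X d Y] by simp
  qed
  also have "\<dots> \<le> p ^ (N - g + min g (multiplicity (int p) l))
      * p ^ (N - f + min f (multiplicity (int p) d))"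
    using card_linear_congruence_le[OF p \<open>g \<le> N\<close> \<open>l \<noteq> 0\<close>, of 0]
      card_linear_congruence_le[OF p \<open>f \<le> N\<close> \<open>d \<noteq> 0\<close>]
    by (intro square_count_le_product) auto
  also have "\<dots> \<le> p ^ (N - g + min g (multiplicity (int p) l))
      * p ^ (N - f + min f (multiplicity (int p) (aj * bk - ak * bj)))"
    using prime_gt_0_nat[OF p] d_mult
    by (intro mult_le_mono2 power_increasing) auto
  finally show ?thesis
    unfolding l .
qed

lemma coprime_prime_power_if_min_multiplicity_eq_0:
  fixes l :: int
  assumes "prime p" and "l \<noteq> 0" and "min e (multiplicity p l) = 0"
  shows "coprime l (p ^ e)"
proof (cases "e = 0")
  case False
  then have "\<not> p dvd l"
    using assms by (metis min_def multiplicity_eq_zero_iff not_prime_unit)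
  then show ?thesis
    using prime_imp_coprime[OF \<open>prime p\<close>] by (simp add: coprime_commute)
qed simp

lemma res_swap: "res a b k j = - res a b j k"
  unfolding res_def by simp

lemma res_dvd_Delta:
  assumes "j \<in> {1, 2, 3}" "k \<in> {1, 2, 3}" "j \<noteq> k"
  shows "res a b j k dvd Delta a b"
  using assms unfolding Delta_def by (auto simp: res_swap[of a b _ "Suc 0"] res_swap[of a b 3 2])

text \<open>Cramer's rule: any of three binary forms is a combination of the other two.\<close>
lemma res_mult_lin:
  "res a b j k * lin a b i x y = res a b i k * lin a b j x y - res a b i j * lin a b k x y"
  unfolding res_def lin_def by (simp add: algebra_simps)

lemma indices_distinct:
  assumes "{i, j, k} = {1, 2, 3 :: nat}"
  shows "i \<noteq> j" "i \<noteq> k" "j \<noteq> k"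
  using arg_cong[OF assms, of card] by (auto simp: card_insert_if split: if_splits)

lemma rho_prime_powers:
  fixes e :: "nat \<Rightarrow> nat"
  assumes ijk: "{i, j, k} = {1, 2, 3}"
  shows "rho a b (p ^ e 1) (p ^ e 2) (p ^ e 3) = square_count (int p ^ (e i + e j + e k))
    (\<lambda>x y. \<forall>m \<in> {i, j, k}. int p ^ e m dvd lin a b m x y)"
proof -
  have "e i + e j + e k = e 1 + e 2 + e 3"
    using arg_cong[OF ijk, of "sum e"] indices_distinct[OF ijk] by simp
  then show ?thesis
    unfolding ijk by (simp add: rho_def square_count_def power_add conj_commute conj_left_commute)
qed

lemma square_count_lin_prime_power:
  assumes "Delta a b \<noteq> 0" and p: "prime p" and "m \<in> {1, 2, 3}"
    and "min e (multiplicity (int p) (ell a b m)) = 0"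
  shows "square_count (int p ^ e) (\<lambda>x y. int p ^ e dvd lin a b m x y) = p ^ e"
proof -
  have "a m \<noteq> 0 \<or> b m \<noteq> 0"
    using assms(1,3) unfolding Delta_def res_def by auto
  moreover have "coprime (gcd (a m) (b m)) (int p ^ e)"
    using assms calculation unfolding ell_def
    by (intro coprime_prime_power_if_min_multiplicity_eq_0) simp_all
  ultimately show ?thesis
    using prime_gt_0_nat[OF p] square_count_one_form[of "int p ^ e" "a m" "b m"]
    by (simp add: lin_def nat_power_eq)
qed

lemma rho_prime_powers_if_not_dvd_Delta:
  fixes e :: "nat \<Rightarrow> nat"
  assumes p: "prime p" and ijk: "{i, j, k} = {1, 2, 3}" and "e i \<le> e j" "e i \<le> e k"
    and "\<not> int p dvd Delta a b"
  shows "rho a b (p ^ e 1) (p ^ e 2) (p ^ e 3) = p ^ (2 * e i + e j + e k)"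
proof -
  let ?N = "e i + e j + e k"
  have "res a b j k dvd Delta a b"
    using ijk indices_distinct[OF ijk] by (intro res_dvd_Delta) auto
  then have "coprime (int p) (res a b j k)"
    using assms(5) p by (intro prime_imp_coprime) (auto dest: dvd_trans)
  then have cop: "coprime (res a b j k) (int p ^ e i)" "coprime (res a b j k) (int p ^ ?N)"
    by (simp_all add: coprime_commute)
  have "int p ^ e i dvd lin a b i x y"
    if "int p ^ e j dvd lin a b j x y" "int p ^ e k dvd lin a b k x y" for x y
  proof -
    have "int p ^ e i dvd lin a b j x y" "int p ^ e i dvd lin a b k x y"
      using that assms(3,4) by (meson dvd_trans le_imp_power_dvd)+
    then have "int p ^ e i dvd res a b j k * lin a b i x y"
      unfolding res_mult_lin[of a b j k i] by simp
    then show ?thesis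
      using cop(1) by (simp add: coprime_commute coprime_dvd_mult_right_iff)
  qed
  then have "rho a b (p ^ e 1) (p ^ e 2) (p ^ e 3) = square_count (int p ^ ?N)
      (\<lambda>x y. int p ^ e j dvd a j * x + b j * y \<and> int p ^ e k dvd a k * x + b k * y)"
    unfolding rho_prime_powers[OF ijk]
    by (intro square_count_cong) (auto simp: lin_def)
  also have "\<dots> = nat (int p ^ ?N div int p ^ e j) * nat (int p ^ ?N div int p ^ e k)"
    using prime_gt_0_nat[OF p] cop(2)
    by (intro square_count_two_forms) (simp_all add: le_imp_power_dvd res_def)
  also have "\<dots> = p ^ (2 * e i + e j + e k)"
    using prime_gt_0_nat[OF p] by (simp add: nat_power_div_power power_add[symmetric] add_ac mult_2)
  finally show ?thesis .
qed

lemma rho_prime_powers_le: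
  fixes e :: "nat \<Rightarrow> nat"
  assumes "Delta a b \<noteq> 0" and p: "prime p" and ijk: "{i, j, k} = {1, 2, 3}"
  shows "rho a b (p ^ e 1) (p ^ e 2) (p ^ e 3)
    \<le> p ^ (2 * e i + e j + e k + min (e j) (multiplicity (int p) (Delta a b))
          + min (e k) (multiplicity (int p) (ell a b k)))"
proof -
  let ?N = "e i + e j + e k"
  have "res a b j k dvd Delta a b"
    using ijk indices_distinct[OF ijk] by (intro res_dvd_Delta) auto
  then have "res a b j k \<noteq> 0"
    and res_mult: "multiplicity (int p) (res a b j k) \<le> multiplicity (int p) (Delta a b)"
    using assms(1) by (auto intro: dvd_imp_multiplicity_le)
  have "rho a b (p ^ e 1) (p ^ e 2) (p ^ e 3) \<le> square_count (int p ^ ?N)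
      (\<lambda>x y. int p ^ e j dvd a j * x + b j * y \<and> int p ^ e k dvd a k * x + b k * y)"
    unfolding rho_prime_powers[OF ijk]
    by (rule square_count_mono) (simp add: lin_def)
  also have "\<dots> \<le> p ^ (?N - e k + min (e k) (multiplicity (int p) (gcd (a k) (b k))))
      * p ^ (?N - e j + min (e j) (multiplicity (int p) (res a b j k)))"
    using p \<open>res a b j k \<noteq> 0\<close> unfolding res_def by (intro square_count_two_forms_le) auto
  also have "\<dots> \<le> p ^ (?N - e k + min (e k) (multiplicity (int p) (ell a b k)))
      * p ^ (?N - e j + min (e j) (multiplicity (int p) (Delta a b)))"
    using prime_gt_0_nat[OF p] res_mult unfolding ell_def
    by (intro mult_le_mono2 power_increasing) auto
  also have "\<dots> = p ^ (2 * e i + e j + e k + min (e j) (multiplicity (int p) (Delta a b))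
          + min (e k) (multiplicity (int p) (ell a b k)))"
    by (simp add: power_add[symmetric] add_ac mult_2)
  finally show ?thesis .
qed

theorem lemma3:
  fixes a b :: "nat \<Rightarrow> int" and p :: nat and e :: "nat \<Rightarrow> nat"
  assumes nonprop: "\<forall>i\<in>{1,2,3}. \<forall>j\<in>{1,2,3}. i \<noteq> j \<longrightarrow> \<not> proportional a b i j"
    and Delta_nz: "Delta a b \<noteq> 0"
    and p: "prime p"
  shows
    "(min (e 1) (multiplicity (int p) (ell a b 1)) = 0 \<longrightarrow> rho a b (p ^ e 1) 1 1 = p ^ e 1) \<and>
     (min (e 2) (multiplicity (int p) (ell a b 2)) = 0 \<longrightarrow> rho a b 1 (p ^ e 2) 1 = p ^ e 2) \<and>
     (min (e 3) (multiplicity (int p) (ell a b 3)) = 0 \<longrightarrow> rho a b 1 1 (p ^ e 3) = p ^ e 3) \<and>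
     (\<forall>i j k. {i, j, k} = {1, 2, 3} \<and> e i \<le> e j \<and> e j \<le> e k \<longrightarrow>
        (\<not> int p dvd Delta a b \<longrightarrow>
           rho a b (p ^ e 1) (p ^ e 2) (p ^ e 3) = p ^ (2 * e i + e j + e k)) \<and>
        (int p dvd Delta a b \<longrightarrow>
           rho a b (p ^ e 1) (p ^ e 2) (p ^ e 3) \<le>
             p ^ (2 * e i + e j + e k + min (e j) (multiplicity (int p) (Delta a b))
                  + min (e k) (multiplicity (int p) (ell a b k)))))"
proof (intro conjI impI allI)
  show "rho a b (p ^ e 1) 1 1 = p ^ e 1" if "min (e 1) (multiplicity (int p) (ell a b 1)) = 0"
    using square_count_lin_prime_power[OF Delta_nz p _ that] by (simp add: rho_def square_count_def)
  show "rho a b 1 (p ^ e 2) 1 = p ^ e 2" if "min (e 2) (multiplicity (int p) (ell a b 2)) = 0"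
    using square_count_lin_prime_power[OF Delta_nz p _ that] by (simp add: rho_def square_count_def)
  show "rho a b 1 1 (p ^ e 3) = p ^ e 3" if "min (e 3) (multiplicity (int p) (ell a b 3)) = 0"
    using square_count_lin_prime_power[OF Delta_nz p _ that] by (simp add: rho_def square_count_def)
  fix i j k
  assume "{i, j, k} = {1, 2, 3} \<and> e i \<le> e j \<and> e j \<le> e k"
  then have ijk: "{i, j, k} = {1, 2, 3}" and "e i \<le> e j" "e i \<le> e k"
    by auto
  show "rho a b (p ^ e 1) (p ^ e 2) (p ^ e 3) = p ^ (2 * e i + e j + e k)"
    if "\<not> int p dvd Delta a b"
    by (rule rho_prime_powers_if_not_dvd_Delta[OF p ijk \<open>e i \<le> e j\<close> \<open>e i \<le> e k\<close> that])
  show "rho a b (p ^ e 1) (p ^ e 2) (p ^ e 3) \<le> p ^ (2 * e i + e j + e k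
      + min (e j) (multiplicity (int p) (Delta a b)) + min (e k) (multiplicity (int p) (ell a b k)))"
    by (rule rho_prime_powers_le[OF Delta_nz p ijk])
qed

end
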